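(* Let $\alpha\in(0,1)$, $n\ge1$, and let $(x_{i1},x_{i2},y_i)\in\mathbb R^3$, $i=1,\dots,n$. Suppose that $$\frac1n\sum_{i=1}^n\mathrm S^{\rm Q}_{\alpha,\theta}(x_{i1},y_i)\le\frac1n\sum_{i=1}^n\mathrm S^{\rm Q}_{\alpha,\theta}(x_{i2},y_i)$$ for every $\theta\in\{x_{11},x_{12},y_1,\dots,x_{n1},x_{n2},y_n\}$. Then the same inequality holds for every $\theta\in\mathbb R$, and consequently $\frac1n\sum_{i=1}^n\mathrm S(x_{i1},y_i)\le\frac1n\sum_{i=1}^n\mathrm S(x_{i2},y_i)$ for every $\mathrm S\in\mathcal S^{\rm Q}_\alpha$ (i.e. the empirical forecast $(x_{i1})_i$ dominates $(x_{i2})_i$ for $\alpha$-quantile prediction).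
   Context: $\mathcal S^{\rm Q}_\alpha$ is the class of all scoring functions $\mathrm S(x,y)=(\mathbb 1(y<x)-\alpha)(g(x)-g(y))$ with $g:\mathbb R\to\mathbb R$ left-continuous and non-decreasing. The elementary quantile scoring function is $\mathrm S^{\rm Q}_{\alpha,\theta}(x,y)=(\mathbb 1(y<x)-\alpha)(\mathbb 1(\theta<x)-\mathbb 1(\theta<y))$, i.e. it equals $1-\alpha$ if $y\le\theta<x$, $\alpha$ if $x\le\theta<y$, and $0$ otherwise. *)

theory Defs
  imports "HOL-Analysis.Analysis"
begin

definition elem_qscore :: "real \<Rightarrow> real \<Rightarrow> real \<Rightarrow> real \<Rightarrow> real" where
  "elem_qscore \<alpha> \<theta> x y =
     ((if y < x then 1 else 0) - \<alpha>) * ((if \<theta> < x then 1 else 0) - (if \<theta> < y then 1 else 0))"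

definition gpl_qscore :: "real \<Rightarrow> (real \<Rightarrow> real) \<Rightarrow> real \<Rightarrow> real \<Rightarrow> real" where
  "gpl_qscore \<alpha> g x y = ((if y < x then 1 else 0) - \<alpha>) * (g x - g y)"

definition quantile_score_class :: "real \<Rightarrow> (real \<Rightarrow> real \<Rightarrow> real) set" where
  "quantile_score_class \<alpha> =
     {S. \<exists>g. mono g \<and> (\<forall>t. continuous (at_left t) g) \<and> S = gpl_qscore \<alpha> g}"

end

theory Submission
  imports Defs
begin

text \<open>Both sums of elementary scores, as functions of \<open>\<theta>\<close>, only change when \<open>\<theta>\<close> crosses
  one of the finitely many data points; so for every \<open>\<theta>\<close> they agree with their values at the
  largest data point \<open>\<le> \<theta>\<close>, or vanish if there is none. For a general score with increasing
  \<open>g\<close>, telescoping \<open>g\<close> along the sorted data points \<open>z\<^sub>0 < \<dots> < z\<^sub>m\<close> writes \<open>S(x, y)\<close>, for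
  data points \<open>x, y\<close>, as the mixture of the elementary scores at \<open>\<theta> = z\<^sub>k\<close> with the nonnegative
  weights \<open>g z\<^sub>k\<^sub>+\<^sub>1 - g z\<^sub>k\<close>, so dominance passes from the elementary scores to \<open>S\<close>.\<close>

lemma strict_sorted_nth_less_iff:
  fixes zs :: "'a::linorder list"
  assumes "sorted_wrt (<) zs" and "i < length zs" and "j < length zs"
  shows "zs ! i < zs ! j \<longleftrightarrow> i < j"
proof
  assume "i < j"
  then show "zs ! i < zs ! j" using sorted_wrt_nth_less[OF assms(1)] assms(3) by blast
next
  assume less: "zs ! i < zs ! j"
  show "i < j"
  proof (rule ccontr)
    assume "\<not> i < j"
    then have "zs ! j \<le> zs ! i"
      using sorted_nth_mono[OF strict_sorted_imp_sorted[OF assms(1)]] assms(2) by simp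
    with less show False by simp
  qed
qed

lemma sum_increments_below_strict_sorted:
  fixes g :: "'a::linorder \<Rightarrow> real"
  assumes sorted: "sorted_wrt (<) zs" and j: "j < length zs"
  shows "(\<Sum>k<length zs - 1. (g (zs ! Suc k) - g (zs ! k)) * (if zs ! k < zs ! j then 1 else 0))
           = g (zs ! j) - g (zs ! 0)"
proof -
  have "(\<Sum>k<length zs - 1. (g (zs ! Suc k) - g (zs ! k)) * (if zs ! k < zs ! j then 1 else 0))
      = (\<Sum>k\<in>{..<length zs - 1} \<inter> {k. k < j}. g (zs ! Suc k) - g (zs ! k))"
    unfolding sum.inter_restrict[OF finite_lessThan]
    by (rule sum.cong) (use j in \<open>auto simp: strict_sorted_nth_less_iff[OF sorted]\<close>)
  also have "{..<length zs - 1} \<inter> {k. k < j} = {..<j}"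
    using j by auto
  finally show ?thesis
    using sum_lessThan_telescope[of "\<lambda>k. g (zs ! k)" j] by simp
qed

lemma gpl_qscore_eq_elem_qscore_mixture:
  assumes sorted: "sorted_wrt (<) zs" and x: "x \<in> set zs" and w: "w \<in> set zs"
  shows "gpl_qscore \<alpha> g x w
           = (\<Sum>k<length zs - 1. (g (zs ! Suc k) - g (zs ! k)) * elem_qscore \<alpha> (zs ! k) x w)"
proof -
  define D where "D k = g (zs ! Suc k) - g (zs ! k)" for k
  have increment: "g v - g (zs ! 0) = (\<Sum>k<length zs - 1. D k * (if zs ! k < v then 1 else 0))"
    if "v \<in> set zs" for v
  proof -
    obtain j where "j < length zs" and "v = zs ! j"
      using \<open>v \<in> set zs\<close> by (metis in_set_conv_nth)
    then show ?thesis
      using sum_increments_below_strict_sorted[OF sorted, of j g] unfolding D_def by simp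
  qed
  have "g x - g w = (g x - g (zs ! 0)) - (g w - g (zs ! 0))"
    by simp
  also have "\<dots> = (\<Sum>k<length zs - 1.
                    D k * ((if zs ! k < x then 1 else 0) - (if zs ! k < w then 1 else 0)))"
    using increment[OF x] increment[OF w] by (simp add: sum_subtractf right_diff_distrib)
  finally show ?thesis
    unfolding gpl_qscore_def elem_qscore_def D_def
    by (simp add: sum_distrib_left algebra_simps)
qed

lemma finite_set_cut_point:
  fixes P :: "real set"
  assumes "finite P"
  obtains "\<forall>z\<in>P. \<theta> < z"
    | p where "p \<in> P" and "\<forall>z\<in>P. \<theta> < z \<longleftrightarrow> p < z"
proof (cases "{z\<in>P. z \<le> \<theta>} = {}")
  case True
  then show ?thesis
    using that(1) by force
next
  case False
  define p where "p = Max {z\<in>P. z \<le> \<theta>}"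
  have fin: "finite {z\<in>P. z \<le> \<theta>}"
    using assms by simp
  have "p \<in> {z\<in>P. z \<le> \<theta>}"
    unfolding p_def using Max_in[OF fin False] .
  moreover have "z \<le> p" if "z \<in> P" and "z \<le> \<theta>" for z
    unfolding p_def using Max_ge[OF fin] that by simp
  ultimately show ?thesis
    using that(2)[of p] by force
qed

lemma elem_qscore_sum_le_everywhere:
  assumes "finite P"
    and points: "\<And>i. i \<in> I \<Longrightarrow> x1 i \<in> P \<and> x2 i \<in> P \<and> y i \<in> P"
    and dominance: "\<And>\<theta>. \<theta> \<in> P \<Longrightarrow>
           (\<Sum>i\<in>I. elem_qscore \<alpha> \<theta> (x1 i) (y i)) \<le> (\<Sum>i\<in>I. elem_qscore \<alpha> \<theta> (x2 i) (y i))"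
  shows "(\<Sum>i\<in>I. elem_qscore \<alpha> \<theta> (x1 i) (y i)) \<le> (\<Sum>i\<in>I. elem_qscore \<alpha> \<theta> (x2 i) (y i))"
proof (cases rule: finite_set_cut_point[OF \<open>finite P\<close>, of \<theta>])
  case 1
  then have "elem_qscore \<alpha> \<theta> x w = 0" if "x \<in> P" and "w \<in> P" for x w
    using that by (simp add: elem_qscore_def)
  then show ?thesis
    using points by (simp add: sum.neutral)
next
  case (2 p)
  then have "elem_qscore \<alpha> \<theta> x w = elem_qscore \<alpha> p x w" if "x \<in> P" and "w \<in> P" for x w
    using that by (simp add: elem_qscore_def)
  then have "(\<Sum>i\<in>I. elem_qscore \<alpha> \<theta> (x i) (y i)) = (\<Sum>i\<in>I. elem_qscore \<alpha> p (x i) (y i))"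
    if "\<And>i. i \<in> I \<Longrightarrow> x i \<in> P" for x
    using that points by (intro sum.cong) auto
  then show ?thesis
    using dominance[OF \<open>p \<in> P\<close>] points by simp
qed

lemma gpl_qscore_sum_le:
  assumes "mono g" and "finite P"
    and points: "\<And>i. i \<in> I \<Longrightarrow> x1 i \<in> P \<and> x2 i \<in> P \<and> y i \<in> P"
    and dominance: "\<And>\<theta>. \<theta> \<in> P \<Longrightarrow>
           (\<Sum>i\<in>I. elem_qscore \<alpha> \<theta> (x1 i) (y i)) \<le> (\<Sum>i\<in>I. elem_qscore \<alpha> \<theta> (x2 i) (y i))"
  shows "(\<Sum>i\<in>I. gpl_qscore \<alpha> g (x1 i) (y i)) \<le> (\<Sum>i\<in>I. gpl_qscore \<alpha> g (x2 i) (y i))"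
proof -
  define zs where "zs = sorted_list_of_set P"
  define m where "m = length zs - 1"
  define D where "D k = g (zs ! Suc k) - g (zs ! k)" for k
  have sorted: "sorted_wrt (<) zs" and set_zs: "set zs = P"
    unfolding zs_def using \<open>finite P\<close> by simp_all
  have D_nonneg: "0 \<le> D k" if "k < m" for k
  proof -
    have "zs ! k < zs ! Suc k"
      using sorted_wrt_nth_less[OF sorted, of k "Suc k"] that unfolding m_def by simp
    then show ?thesis
      unfolding D_def using \<open>mono g\<close> by (simp add: monoD)
  qed
  have mixture: "(\<Sum>i\<in>I. gpl_qscore \<alpha> g (x i) (y i))
                   = (\<Sum>k<m. D k * (\<Sum>i\<in>I. elem_qscore \<alpha> (zs ! k) (x i) (y i)))"
    if "\<And>i. i \<in> I \<Longrightarrow> x i \<in> P" for x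
  proof -
    have "(\<Sum>i\<in>I. gpl_qscore \<alpha> g (x i) (y i))
            = (\<Sum>i\<in>I. \<Sum>k<m. D k * elem_qscore \<alpha> (zs ! k) (x i) (y i))"
      using that points unfolding D_def m_def
      by (intro sum.cong) (auto simp: gpl_qscore_eq_elem_qscore_mixture[OF sorted] set_zs)
    then show ?thesis
      by (simp add: sum.swap[of _ I] sum_distrib_left)
  qed
  have "(\<Sum>k<m. D k * (\<Sum>i\<in>I. elem_qscore \<alpha> (zs ! k) (x1 i) (y i)))
          \<le> (\<Sum>k<m. D k * (\<Sum>i\<in>I. elem_qscore \<alpha> (zs ! k) (x2 i) (y i)))"
  proof (rule sum_mono)
    fix k assume "k \<in> {..<m}"
    then have "zs ! k \<in> P" and "0 \<le> D k"
      using set_zs D_nonneg unfolding m_def by auto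
    then show "D k * (\<Sum>i\<in>I. elem_qscore \<alpha> (zs ! k) (x1 i) (y i))
                 \<le> D k * (\<Sum>i\<in>I. elem_qscore \<alpha> (zs ! k) (x2 i) (y i))"
      using dominance by (simp add: mult_left_mono)
  qed
  then show ?thesis
    using mixture[of x1] mixture[of x2] points by simp
qed

theorem mainTheorem8:
  fixes \<alpha> :: real and n :: nat and x1 x2 y :: "nat \<Rightarrow> real"
  assumes "0 < \<alpha>" and "\<alpha> < 1" and "n \<ge> 1"
    and "\<forall>\<theta> \<in> (\<Union>i\<in>{1..n}. {x1 i, x2 i, y i}).
           (\<Sum>i=1..n. elem_qscore \<alpha> \<theta> (x1 i) (y i)) / real n
             \<le> (\<Sum>i=1..n. elem_qscore \<alpha> \<theta> (x2 i) (y i)) / real n"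
  shows "(\<forall>\<theta>::real. (\<Sum>i=1..n. elem_qscore \<alpha> \<theta> (x1 i) (y i)) / real n
             \<le> (\<Sum>i=1..n. elem_qscore \<alpha> \<theta> (x2 i) (y i)) / real n)
       \<and> (\<forall>S \<in> quantile_score_class \<alpha>.
             (\<Sum>i=1..n. S (x1 i) (y i)) / real n \<le> (\<Sum>i=1..n. S (x2 i) (y i)) / real n)"
proof -
  define P where "P = (\<Union>i\<in>{1..n}. {x1 i, x2 i, y i})"
  have n_pos: "0 < real n"
    using \<open>n \<ge> 1\<close> by simp
  have "finite P" and points: "\<And>i. i \<in> {1..n} \<Longrightarrow> x1 i \<in> P \<and> x2 i \<in> P \<and> y i \<in> P"
    unfolding P_def by auto
  have dominance: "(\<Sum>i=1..n. elem_qscore \<alpha> \<theta> (x1 i) (y i))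
                     \<le> (\<Sum>i=1..n. elem_qscore \<alpha> \<theta> (x2 i) (y i))" if "\<theta> \<in> P" for \<theta>
  proof -
    have "(\<Sum>i=1..n. elem_qscore \<alpha> \<theta> (x1 i) (y i)) / real n
            \<le> (\<Sum>i=1..n. elem_qscore \<alpha> \<theta> (x2 i) (y i)) / real n"
      using assms(4) that unfolding P_def by blast
    then show ?thesis
      using n_pos by (simp add: divide_le_cancel)
  qed
  have "(\<Sum>i=1..n. S (x1 i) (y i)) \<le> (\<Sum>i=1..n. S (x2 i) (y i))"
    if "S \<in> quantile_score_class \<alpha>" for S
    using that gpl_qscore_sum_le[OF _ \<open>finite P\<close> points dominance]
    unfolding quantile_score_class_def by auto
  moreover have "(\<Sum>i=1..n. elem_qscore \<alpha> \<theta> (x1 i) (y i))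
                   \<le> (\<Sum>i=1..n. elem_qscore \<alpha> \<theta> (x2 i) (y i))" for \<theta>
    using elem_qscore_sum_le_everywhere[OF \<open>finite P\<close> points dominance] .
  ultimately show ?thesis
    using n_pos by (simp add: divide_right_mono)
qed

end
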